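(* Let $f:\{0,1\}^n\to\{0,1\}$ be a total Boolean function and $g=1-2f:\{0,1\}^n\to\{-1,1\}$. Let $R=H\,\mathrm{diag}(g)\,H$. Then $\lambda(f)=\max_{v\in\mathbb{R}^{2^n}:\|v\|=1} v^{\mathsf T}(RXR-X)v$.
   Context: $H$ is the $2^n\times2^n$ matrix indexed by $\{0,1\}^n$ with $H_{xy}=(-1)^{\langle x,y\rangle}2^{-n/2}$. $\mathrm{diag}(g)$ is the diagonal matrix with $\mathrm{diag}(g)_{xx}=g(x)$, and $X$ is the diagonal matrix with $X_{xx}=|x|$, the Hamming weight of $x$. The sensitivity graph $G_f$ has vertex set $\{0,1\}^n$ and an edge between $x,y$ iff they differ in exactly one coordinate and $f(x)\ne f(y)$; $A_f$ is its adjacency matrix and $\lambda(f)=\|A_f\|$. *)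

theory Defs
  imports "HOL-Analysis.Analysis"
begin

text \<open>The Boolean cube {0,1}^n is encoded as the subsets of {0..<n}
  (x corresponds to the indicator vector of x).  Matrices indexed by the cube
  are functions nat set => nat set => real, vectors are nat set => real; only
  their values on the cube matter.\<close>

definition cube :: "nat \<Rightarrow> nat set set" where
  "cube n = Pow {..<n}"

text \<open>Inner product <x,y> = |x \<inter> y|, Hamming weight |x| = card x.\<close>

definition hadamard :: "nat \<Rightarrow> nat set \<Rightarrow> nat set \<Rightarrow> real" where
  "hadamard n x y = (-1) ^ card (x \<inter> y) * 2 powr (- real n / 2)"

definition mmul :: "nat \<Rightarrow> (nat set \<Rightarrow> nat set \<Rightarrow> real) \<Rightarrow> (nat set \<Rightarrow> nat set \<Rightarrow> real)
                     \<Rightarrow> nat set \<Rightarrow> nat set \<Rightarrow> real" where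
  "mmul n A B x y = (\<Sum>z\<in>cube n. A x z * B z y)"

definition mdiag :: "(nat set \<Rightarrow> real) \<Rightarrow> nat set \<Rightarrow> nat set \<Rightarrow> real" where
  "mdiag g x y = (if x = y then g x else 0)"

definition weight_mat :: "nat set \<Rightarrow> nat set \<Rightarrow> real" where
  "weight_mat x y = (if x = y then real (card x) else 0)"

definition sens_adj :: "(nat set \<Rightarrow> real) \<Rightarrow> nat set \<Rightarrow> nat set \<Rightarrow> real" where
  "sens_adj f x y = (if card (x - y \<union> (y - x)) = 1 \<and> f x \<noteq> f y then 1 else 0)"

definition vnorm :: "nat \<Rightarrow> (nat set \<Rightarrow> real) \<Rightarrow> real" where
  "vnorm n v = sqrt (\<Sum>x\<in>cube n. (v x)\<^sup>2)"

definition mvec :: "nat \<Rightarrow> (nat set \<Rightarrow> nat set \<Rightarrow> real) \<Rightarrow> (nat set \<Rightarrow> real) \<Rightarrow> nat set \<Rightarrow> real" where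
  "mvec n A v x = (\<Sum>y\<in>cube n. A x y * v y)"

definition op_norm :: "nat \<Rightarrow> (nat set \<Rightarrow> nat set \<Rightarrow> real) \<Rightarrow> real" where
  "op_norm n A = Sup {vnorm n (mvec n A v) | v. vnorm n v = 1}"

definition quad_form :: "nat \<Rightarrow> (nat set \<Rightarrow> nat set \<Rightarrow> real) \<Rightarrow> (nat set \<Rightarrow> real) \<Rightarrow> real" where
  "quad_form n M v = (\<Sum>x\<in>cube n. \<Sum>y\<in>cube n. v x * M x y * v y)"

end

theory Submission
  imports Defs
begin

text \<open>Put w = H v. Since H is a symmetric involution, v' (R X R - X) v = w' (D H X H D - H X H) w
  with D = diag g. Expanding the Hamming weight into characters shows H X H = (n/2) I - Q/2, where
  Q is the adjacency matrix of the hypercube. As g takes the values +-1, the terms (n/2) I cancel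
  and Q - D Q D = 2 A_f, so the quadratic form of R X R - X at v is that of A_f at w.
  It remains to see that the maximum m of w' A_f w on the unit sphere is the norm of A_f. The graph
  G_f is bipartite (every edge changes the parity of |x|), so flipping the signs of w on odd
  vertices negates the quadratic form; hence |w' A_f w| <= m |w|^2 for all w, and polarization
  gives |A_f u| <= m for unit u. The reverse inequality is Cauchy-Schwarz.\<close>

section \<open>Characters of the Boolean cube\<close>

lemma finite_cube: "finite (cube n)"
  by (simp add: cube_def)

lemma finite_of_mem_cube: "x \<in> cube n \<Longrightarrow> finite x"
  by (auto simp: cube_def intro: finite_subset)

lemma sym_diff_subset_lessThan: "x \<in> cube n \<Longrightarrow> y \<in> cube n \<Longrightarrow> sym_diff x y \<subseteq> {..<n}"
  by (auto simp: cube_def)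

lemma sym_diff_singleton_in_cube: "x \<in> cube n \<Longrightarrow> i < n \<Longrightarrow> sym_diff x {i} \<in> cube n"
  by (auto simp: cube_def)

lemma sym_diff_eq_empty_iff: "sym_diff x y = {} \<longleftrightarrow> x = y"
  by auto

lemma neg_one_power_card_sym_diff:
  assumes "finite A" "finite B"
  shows "(-1::real) ^ card A * (-1) ^ card B = (-1) ^ card (sym_diff A B)"
proof -
  have "card A = card (A \<inter> B) + card (A - B)" "card B = card (A \<inter> B) + card (B - A)"
    using assms card_Int_Diff[of A B] card_Int_Diff[of B A] by (auto simp: Int_commute)
  moreover have "card (sym_diff A B) = card (A - B) + card (B - A)"
    using assms by (intro card_Un_disjoint) auto
  ultimately have "(-1::real) ^ card A * (-1) ^ card B
      = ((-1) ^ card (A \<inter> B)) ^ 2 * (-1) ^ card (sym_diff A B)"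
    by (simp add: power_add power2_eq_square mult_ac)
  then show ?thesis
    by (simp flip: power_mult)
qed

lemma character_sum:
  assumes "T \<subseteq> {..<n}"
  shows "(\<Sum>z\<in>cube n. (-1::real) ^ card (z \<inter> T)) = (if T = {} then 2 ^ n else 0)"
proof (cases "T = {}")
  case True
  then show ?thesis by (simp add: cube_def card_Pow)
next
  case False
  then obtain t where t: "t \<in> T" by auto
  define flip where "flip z = sym_diff z {t}" for z
  have flip_in_cube: "flip z \<in> cube n" if "z \<in> cube n" for z
    using that t assms by (auto simp: flip_def intro: sym_diff_singleton_in_cube)
  have flip_flip: "flip (flip z) = z" for z
    by (auto simp: flip_def)
  have flip_sign: "(-1::real) ^ card (flip z \<inter> T) = - ((-1) ^ card (z \<inter> T))" if "z \<in> cube n" for z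
  proof -
    have "flip z \<inter> T = sym_diff (z \<inter> T) {t}"
      using t by (auto simp: flip_def)
    then show ?thesis
      using neg_one_power_card_sym_diff[of "z \<inter> T" "{t}"] finite_of_mem_cube[OF that] by simp
  qed
  have "(\<Sum>z\<in>cube n. (-1::real) ^ card (z \<inter> T)) = (\<Sum>z\<in>cube n. (-1) ^ card (flip z \<inter> T))"
    by (rule sum.reindex_bij_witness[of _ flip flip]) (auto simp: flip_flip flip_in_cube)
  also have "\<dots> = - (\<Sum>z\<in>cube n. (-1) ^ card (z \<inter> T))"
    by (simp add: flip_sign sum_negf)
  finally show ?thesis
    using False by simp
qed

lemma card_eq_sum_characters:
  assumes "z \<in> cube n"
  shows "real (card z) = (\<Sum>i<n. (1 - (-1::real) ^ card (z \<inter> {i})) / 2)"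
proof -
  have "z \<subseteq> {..<n}"
    using assms by (simp add: cube_def)
  then have "real (card z) = (\<Sum>i<n. if i \<in> z then 1 else 0)"
    by (simp add: sum.If_cases Int_absorb1)
  also have "\<dots> = (\<Sum>i<n. (1 - (-1::real) ^ card (z \<inter> {i})) / 2)"
    by (rule sum.cong) auto
  finally show ?thesis .
qed

lemma sum_if_eq_singleton:
  fixes n :: nat
  assumes "T \<subseteq> {..<n}"
  shows "(\<Sum>i<n. if T = {i} then c else 0) = (if card T = 1 then c else 0)"
proof (cases "card T = 1")
  case True
  then obtain t where "T = {t}"
    by (auto simp: card_1_singleton_iff)
  with assms show ?thesis
    by simp
next
  case False
  then have "T \<noteq> {i}" for i
    by auto
  then show ?thesis
    using False by simp
qed

lemma card_mult_character:
  assumes "z \<in> cube n"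
  shows "real (card z) * (-1) ^ card (z \<inter> T)
           = (\<Sum>i<n. ((-1) ^ card (z \<inter> T) - (-1) ^ card (z \<inter> sym_diff T {i})) / 2)"
proof -
  have "(-1::real) ^ card (z \<inter> {i}) * (-1) ^ card (z \<inter> T) = (-1) ^ card (z \<inter> sym_diff T {i})" for i
  proof -
    have "sym_diff (z \<inter> {i}) (z \<inter> T) = z \<inter> sym_diff T {i}"
      by auto
    then show ?thesis
      using neg_one_power_card_sym_diff[of "z \<inter> {i}" "z \<inter> T"] finite_of_mem_cube[OF assms] by simp
  qed
  then show ?thesis
    unfolding card_eq_sum_characters[OF assms] sum_distrib_right
    by (intro sum.cong refl) (simp add: algebra_simps diff_divide_distrib)
qed

lemma weighted_character_sum:
  assumes T: "T \<subseteq> {..<n}"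
  shows "(\<Sum>z\<in>cube n. real (card z) * (-1) ^ card (z \<inter> T))
           = 2 ^ n * ((if T = {} then real n / 2 else 0) - (if card T = 1 then 1 / 2 else 0))"
proof -
  have sym_diff_T: "sym_diff T {i} \<subseteq> {..<n}" if "i < n" for i
    using T that by auto
  have "(\<Sum>z\<in>cube n. real (card z) * (-1) ^ card (z \<inter> T))
      = (\<Sum>i<n. \<Sum>z\<in>cube n. ((-1) ^ card (z \<inter> T) - (-1) ^ card (z \<inter> sym_diff T {i})) / 2)"
    by (simp add: card_mult_character cong: sum.cong) (rule sum.swap)
  also have "\<dots> = (\<Sum>i<n. ((if T = {} then 2 ^ n else 0) - (if T = {i} then 2 ^ n else 0)) / 2)"
  proof (intro sum.cong refl)
    fix i assume "i \<in> {..<n}"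
    moreover have "sym_diff T {i} = {} \<longleftrightarrow> T = {i}"
      by auto
    ultimately show "(\<Sum>z\<in>cube n. ((-1::real) ^ card (z \<inter> T) - (-1) ^ card (z \<inter> sym_diff T {i})) / 2)
        = ((if T = {} then 2 ^ n else 0) - (if T = {i} then 2 ^ n else 0)) / 2"
      using character_sum[OF T] character_sum[OF sym_diff_T]
      by (simp add: sum_subtractf flip: sum_divide_distrib)
  qed
  also have "\<dots> = n * (if T = {} then 2 ^ n else 0) / 2 - (\<Sum>i<n. if T = {i} then 2 ^ n else 0) / 2"
    by (simp add: sum_subtractf diff_divide_distrib flip: sum_divide_distrib)
  finally show ?thesis
    by (simp add: sum_if_eq_singleton[OF T])
qed

section \<open>Vectors, matrices and quadratic forms on the cube\<close>

definition sq_norm :: "nat \<Rightarrow> (nat set \<Rightarrow> real) \<Rightarrow> real" where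
  "sq_norm n v = (\<Sum>x\<in>cube n. (v x)\<^sup>2)"

lemma mvec_cong: "(\<And>x. x \<in> cube n \<Longrightarrow> u x = u' x) \<Longrightarrow> mvec n A u = mvec n A u'"
  unfolding mvec_def by (intro ext sum.cong) auto

lemma quad_form_cong: "(\<And>x. x \<in> cube n \<Longrightarrow> u x = u' x) \<Longrightarrow> quad_form n A u = quad_form n A u'"
  unfolding quad_form_def by (intro sum.cong) auto

lemma sq_norm_cong: "(\<And>x. x \<in> cube n \<Longrightarrow> u x = u' x) \<Longrightarrow> sq_norm n u = sq_norm n u'"
  unfolding sq_norm_def by (intro sum.cong) auto

lemma quad_form_matrix_cong:
  "(\<And>x y. x \<in> cube n \<Longrightarrow> y \<in> cube n \<Longrightarrow> A x y = B x y) \<Longrightarrow> quad_form n A v = quad_form n B v"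
  unfolding quad_form_def by (intro sum.cong) auto

lemma quad_form_delta: "quad_form n (\<lambda>x y. if x = y then c else 0) v = c * sq_norm n v"
  unfolding quad_form_def sq_norm_def sum_distrib_left
proof (rule sum.cong[OF refl])
  fix x assume "x \<in> cube n"
  have "(\<Sum>y\<in>cube n. v x * (if x = y then c else 0) * v y) = (\<Sum>y\<in>cube n. if x = y then c * (v x)\<^sup>2 else 0)"
    by (rule sum.cong) (auto simp: power2_eq_square)
  then show "(\<Sum>y\<in>cube n. v x * (if x = y then c else 0) * v y) = c * (v x)\<^sup>2"
    using \<open>x \<in> cube n\<close> by (simp add: finite_cube)
qed

lemma vnorm_eq_sqrt_sq_norm: "vnorm n v = sqrt (sq_norm n v)"
  by (simp add: vnorm_def sq_norm_def)

lemma vnorm_eq_1_iff: "vnorm n v = 1 \<longleftrightarrow> sq_norm n v = 1"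
  by (simp add: vnorm_eq_sqrt_sq_norm)

lemma sq_norm_nonneg: "0 \<le> sq_norm n v"
  by (simp add: sq_norm_def sum_nonneg)

lemma sq_norm_scale: "sq_norm n (\<lambda>x. c * v x) = c\<^sup>2 * sq_norm n v"
  by (simp add: sq_norm_def sum_distrib_left power_mult_distrib)

lemma sq_norm_eq_0_iff: "sq_norm n v = 0 \<longleftrightarrow> (\<forall>x\<in>cube n. v x = 0)"
  by (simp add: sq_norm_def sum_nonneg_eq_0_iff finite_cube)

lemma parallelogram_sq_norm:
  "sq_norm n (\<lambda>x. u x + s x) + sq_norm n (\<lambda>x. u x - s x) = 2 * sq_norm n u + 2 * sq_norm n s"
  by (simp add: sq_norm_def power2_eq_square algebra_simps sum.distrib sum_subtractf sum_distrib_left)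

lemma mvec_mmul: "mvec n (mmul n A B) v = mvec n A (mvec n B v)"
  unfolding mvec_def mmul_def sum_distrib_left sum_distrib_right
  by (subst sum.swap) (simp add: mult_ac)

lemma mvec_mdiag: "x \<in> cube n \<Longrightarrow> mvec n (mdiag g) v x = g x * v x"
  by (simp add: mvec_def mdiag_def if_distrib if_distribR finite_cube cong: if_cong)

lemma quad_form_eq_sum_mvec: "quad_form n A v = (\<Sum>x\<in>cube n. v x * mvec n A v x)"
  unfolding quad_form_def mvec_def by (simp add: sum_distrib_left mult_ac)

lemma quad_form_diff: "quad_form n (\<lambda>x y. A x y - B x y) v = quad_form n A v - quad_form n B v"
  unfolding quad_form_def by (simp add: algebra_simps sum_subtractf)

lemma quad_form_scale: "quad_form n A (\<lambda>x. c * v x) = c\<^sup>2 * quad_form n A v"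
  unfolding quad_form_def by (simp add: sum_distrib_left power2_eq_square mult_ac)

lemma quad_form_mult_diag: "quad_form n A (\<lambda>x. g x * v x) = quad_form n (\<lambda>x y. g x * A x y * g y) v"
  unfolding quad_form_def by (simp add: mult_ac)

lemma mmul_sandwich_sym:
  assumes "\<And>x y. A x y = A y x" "\<And>x y. B x y = B y x"
  shows "mmul n A (mmul n B A) x y = mmul n A (mmul n B A) y x"
proof -
  have "mmul n A (mmul n B A) x y = (\<Sum>z\<in>cube n. \<Sum>w\<in>cube n. A x z * B z w * A w y)"
    by (simp add: mmul_def sum_distrib_left mult_ac)
  also have "\<dots> = (\<Sum>w\<in>cube n. \<Sum>z\<in>cube n. A y w * B w z * A z x)"
    by (subst sum.swap) (simp add: assms mult_ac)
  also have "\<dots> = mmul n A (mmul n B A) y x"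
    by (simp add: mmul_def sum_distrib_left mult_ac)
  finally show ?thesis .
qed

lemma quad_form_mmul_sym:
  assumes "\<And>x y. A x y = A y x"
  shows "quad_form n (mmul n A C) v = (\<Sum>z\<in>cube n. mvec n A v z * mvec n C v z)"
proof -
  have "quad_form n (mmul n A C) v = (\<Sum>x\<in>cube n. \<Sum>y\<in>cube n. \<Sum>z\<in>cube n. v x * A x z * (C z y * v y))"
    unfolding quad_form_def mmul_def sum_distrib_left sum_distrib_right by (simp add: mult_ac)
  also have "\<dots> = (\<Sum>z\<in>cube n. \<Sum>x\<in>cube n. \<Sum>y\<in>cube n. v x * A x z * (C z y * v y))"
    by (subst sum.swap, rule sum.cong[OF refl], rule sum.swap)
  also have "\<dots> = (\<Sum>z\<in>cube n. mvec n A v z * mvec n C v z)"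
    unfolding mvec_def sum_product by (simp add: assms mult_ac)
  finally show ?thesis .
qed

lemma quad_form_sandwich:
  assumes "\<And>x y. A x y = A y x"
  shows "quad_form n (mmul n A (mmul n B A)) v = quad_form n B (mvec n A v)"
  by (simp only: quad_form_mmul_sym[OF assms] mvec_mmul quad_form_eq_sum_mvec[of n B])

section \<open>The Walsh-Hadamard transform\<close>

lemma hadamard_sym: "hadamard n x y = hadamard n y x"
  by (simp add: hadamard_def Int_commute)

lemma hadamard_mult:
  assumes "z \<in> cube n"
  shows "hadamard n z x * hadamard n z y = (-1) ^ card (z \<inter> sym_diff x y) / 2 ^ n"
proof -
  have "hadamard n z x * hadamard n z y
      = (-1) ^ card (z \<inter> x) * (-1) ^ card (z \<inter> y) * (2 powr (- real n / 2) * 2 powr (- real n / 2))"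
    by (simp add: hadamard_def mult_ac)
  also have "(-1::real) ^ card (z \<inter> x) * (-1) ^ card (z \<inter> y) = (-1) ^ card (z \<inter> sym_diff x y)"
  proof -
    have "sym_diff (z \<inter> x) (z \<inter> y) = z \<inter> sym_diff x y"
      by auto
    then show ?thesis
      using neg_one_power_card_sym_diff[of "z \<inter> x" "z \<inter> y"] finite_of_mem_cube[OF assms] by simp
  qed
  also have "2 powr (- real n / 2) * 2 powr (- real n / 2) = (2::real) powr (- real n)"
    by (simp flip: powr_add)
  also have "\<dots> = 1 / 2 ^ n"
    by (simp add: powr_minus powr_realpow divide_inverse)
  finally show ?thesis
    by simp
qed

lemma mmul_hadamard_hadamard:
  assumes "x \<in> cube n" "y \<in> cube n"
  shows "mmul n (hadamard n) (hadamard n) x y = (if x = y then 1 else 0)"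
proof -
  have "mmul n (hadamard n) (hadamard n) x y = (\<Sum>z\<in>cube n. hadamard n z x * hadamard n z y)"
    unfolding mmul_def by (intro sum.cong refl) (simp add: hadamard_sym)
  also have "\<dots> = (\<Sum>z\<in>cube n. (-1::real) ^ card (z \<inter> sym_diff x y)) / 2 ^ n"
    unfolding sum_divide_distrib by (intro sum.cong refl) (rule hadamard_mult)
  also have "\<dots> = (if x = y then 1 else 0)"
    unfolding character_sum[OF sym_diff_subset_lessThan[OF assms]] sym_diff_eq_empty_iff by simp
  finally show ?thesis .
qed

lemma hadamard_involutive:
  assumes "x \<in> cube n"
  shows "mvec n (hadamard n) (mvec n (hadamard n) u) x = u x"
proof -
  have "mvec n (hadamard n) (mvec n (hadamard n) u) x = (\<Sum>y\<in>cube n. if x = y then u y else 0)"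
    unfolding mvec_mmul[symmetric] mvec_def by (intro sum.cong) (simp_all add: mmul_hadamard_hadamard assms)
  then show ?thesis
    using assms by (simp add: finite_cube)
qed

lemma sq_norm_hadamard: "sq_norm n (mvec n (hadamard n) v) = sq_norm n v"
proof -
  have "sq_norm n (mvec n (hadamard n) v) = quad_form n (mmul n (hadamard n) (hadamard n)) v"
    by (simp only: quad_form_mmul_sym[OF hadamard_sym] sq_norm_def power2_eq_square)
  also have "\<dots> = quad_form n (\<lambda>x y. if x = y then 1 else 0) v"
    by (rule quad_form_matrix_cong) (rule mmul_hadamard_hadamard)
  finally show ?thesis
    by (simp add: quad_form_delta)
qed

definition hypercube_adj :: "nat set \<Rightarrow> nat set \<Rightarrow> real" where
  "hypercube_adj x y = (if card (sym_diff x y) = 1 then 1 else 0)"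

lemma mmul_weight_mat: "z \<in> cube n \<Longrightarrow> mmul n weight_mat B z y = real (card z) * B z y"
  by (simp add: mmul_def weight_mat_def if_distrib if_distribR finite_cube cong: if_cong)

lemma hadamard_weight_hadamard:
  assumes "x \<in> cube n" "y \<in> cube n"
  shows "mmul n (hadamard n) (mmul n weight_mat (hadamard n)) x y
           = (if x = y then real n / 2 else 0) - hypercube_adj x y / 2"
proof -
  have "mmul n (hadamard n) (mmul n weight_mat (hadamard n)) x y
      = (\<Sum>z\<in>cube n. real (card z) * (hadamard n z x * hadamard n z y))"
    unfolding mmul_def[of n "hadamard n"]
    by (intro sum.cong refl) (simp add: mmul_weight_mat hadamard_sym[of n x])
  also have "\<dots> = (\<Sum>z\<in>cube n. real (card z) * (-1) ^ card (z \<inter> sym_diff x y)) / 2 ^ n"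
    unfolding sum_divide_distrib by (intro sum.cong refl) (simp add: hadamard_mult)
  also have "\<dots> = (if x = y then real n / 2 else 0) - hypercube_adj x y / 2"
    unfolding weighted_character_sum[OF sym_diff_subset_lessThan[OF assms]] sym_diff_eq_empty_iff
    by (simp add: hypercube_adj_def)
  finally show ?thesis .
qed

lemma quad_form_weight_hadamard:
  "quad_form n weight_mat (mvec n (hadamard n) u)
     = real n / 2 * sq_norm n u - quad_form n hypercube_adj u / 2"
proof -
  have "quad_form n weight_mat (mvec n (hadamard n) u)
      = quad_form n (mmul n (hadamard n) (mmul n weight_mat (hadamard n))) u"
    by (rule quad_form_sandwich[OF hadamard_sym, symmetric])
  also have "\<dots> = quad_form n (\<lambda>x y. (if x = y then real n / 2 else 0) - hypercube_adj x y / 2) u"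
    by (rule quad_form_matrix_cong) (rule hadamard_weight_hadamard)
  also have "\<dots> = real n / 2 * sq_norm n u - quad_form n (\<lambda>x y. hypercube_adj x y / 2) u"
    by (simp only: quad_form_diff quad_form_delta)
  finally show ?thesis
    by (simp add: quad_form_def sum_divide_distrib)
qed

lemma hypercube_adj_minus_conj:
  assumes "f x \<in> {0, 1}" "f y \<in> {0, 1}"
  shows "hypercube_adj x y - (1 - 2 * f x) * hypercube_adj x y * (1 - 2 * f y) = 2 * sens_adj f x y"
  using assms by (auto simp: hypercube_adj_def sens_adj_def)

lemma quad_form_conj_weight_eq_sens_adj:
  assumes f01: "\<forall>x\<in>cube n. f x \<in> {0, 1}"
  defines "g \<equiv> \<lambda>x. 1 - 2 * f x"
  defines "R \<equiv> mmul n (hadamard n) (mmul n (mdiag g) (hadamard n))"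
  shows "quad_form n (\<lambda>x y. mmul n R (mmul n weight_mat R) x y - weight_mat x y) v
           = quad_form n (sens_adj f) (mvec n (hadamard n) v)"
proof -
  let ?H = "hadamard n"
  define w where "w = mvec n ?H v"
  define gw where "gw x = g x * w x" for x
  have R_sym: "R x y = R y x" for x y
    unfolding R_def by (rule mmul_sandwich_sym) (simp_all add: hadamard_sym mdiag_def)
  have "mvec n R v = mvec n ?H gw"
    unfolding R_def mvec_mmul w_def[symmetric] by (rule mvec_cong) (simp add: mvec_mdiag gw_def)
  then have RXR: "quad_form n (mmul n R (mmul n weight_mat R)) v = quad_form n weight_mat (mvec n ?H gw)"
    by (simp add: quad_form_sandwich R_sym)
  have X: "quad_form n weight_mat v = quad_form n weight_mat (mvec n ?H w)"
    unfolding w_def by (rule quad_form_cong) (simp add: hadamard_involutive)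
  have "sq_norm n gw = sq_norm n w"
    unfolding sq_norm_def gw_def g_def using f01 by (intro sum.cong) (auto simp: power_mult_distrib)
  moreover have "quad_form n hypercube_adj w - quad_form n hypercube_adj gw = 2 * quad_form n (sens_adj f) w"
  proof -
    have "quad_form n hypercube_adj w - quad_form n hypercube_adj gw
        = quad_form n (\<lambda>x y. 2 * sens_adj f x y) w"
      unfolding gw_def quad_form_mult_diag quad_form_diff[symmetric] g_def
      by (rule quad_form_matrix_cong) (intro hypercube_adj_minus_conj; use f01 in blast)
    then show ?thesis
      by (simp add: quad_form_def sum_distrib_left mult_ac)
  qed
  ultimately show ?thesis
    by (simp add: quad_form_diff RXR X quad_form_weight_hadamard w_def algebra_simps)
qed

section \<open>The maximum of a quadratic form on the unit sphere\<close>

lemma sq_norm_mvec_le: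
  "sq_norm n (mvec n A v) \<le> (\<Sum>x\<in>cube n. \<Sum>y\<in>cube n. (A x y)\<^sup>2) * sq_norm n v"
proof -
  have "(mvec n A v x)\<^sup>2 \<le> (\<Sum>y\<in>cube n. (A x y)\<^sup>2) * sq_norm n v" for x
    unfolding mvec_def sq_norm_def by (rule Cauchy_Schwarz_ineq_sum)
  then show ?thesis
    unfolding sq_norm_def[of n "mvec n A v"] sum_distrib_right by (rule sum_mono)
qed

lemma bdd_above_vnorm_mvec: "bdd_above {vnorm n (mvec n A v) | v. vnorm n v = 1}"
proof (rule bdd_aboveI)
  fix r assume "r \<in> {vnorm n (mvec n A v) | v. vnorm n v = 1}"
  then obtain v where "r = vnorm n (mvec n A v)" "sq_norm n v = 1"
    by (auto simp: vnorm_eq_1_iff)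
  then show "r \<le> sqrt (\<Sum>x\<in>cube n. \<Sum>y\<in>cube n. (A x y)\<^sup>2)"
    using sq_norm_mvec_le[of n A v] by (simp add: vnorm_eq_sqrt_sq_norm)
qed

lemma vnorm_mvec_le_op_norm: "vnorm n v = 1 \<Longrightarrow> vnorm n (mvec n A v) \<le> op_norm n A"
  unfolding op_norm_def by (rule cSup_upper[OF _ bdd_above_vnorm_mvec]) auto

lemma sq_norm_indicator_empty: "sq_norm n (\<lambda>x. if x = {} then 1 else 0) = 1"
  by (simp add: sq_norm_def if_distrib if_distribR finite_cube cube_def cong: if_cong)

lemma op_norm_le:
  assumes "\<And>v. vnorm n v = 1 \<Longrightarrow> vnorm n (mvec n A v) \<le> m"
  shows "op_norm n A \<le> m"
  using sq_norm_indicator_empty[of n] assms unfolding op_norm_def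
  by (intro cSup_least) (auto simp: vnorm_eq_1_iff)

lemma quad_form_le_op_norm:
  assumes "vnorm n v = 1"
  shows "quad_form n A v \<le> op_norm n A"
proof -
  have "(quad_form n A v)\<^sup>2 \<le> sq_norm n v * sq_norm n (mvec n A v)"
    unfolding quad_form_eq_sum_mvec sq_norm_def by (rule Cauchy_Schwarz_ineq_sum)
  then have "quad_form n A v \<le> vnorm n (mvec n A v)"
    using assms by (simp add: vnorm_eq_1_iff vnorm_eq_sqrt_sq_norm real_le_rsqrt)
  also have "\<dots> \<le> op_norm n A"
    using assms by (rule vnorm_mvec_le_op_norm)
  finally show ?thesis .
qed

lemma continuous_on_coordinate [continuous_intros]: "continuous_on S (\<lambda>v::'a \<Rightarrow> real. v x)"
  by (rule continuous_on_subset[OF continuous_on_product_coordinates]) simp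

lemma quad_form_attains_max:
  obtains w where "sq_norm n w = 1" "\<And>v. sq_norm n v = 1 \<Longrightarrow> quad_form n A v \<le> quad_form n A w"
proof -
  \<comment> \<open>Vectors are functions on all of nat set; the box is compact because it pins them to 0 off the cube.\<close>
  define S where "S x = (if x \<in> cube n then {-1..1} else {0::real})" for x
  define K where "K = PiE UNIV S \<inter> {v. sq_norm n v = 1}"
  have "compactin (product_topology (\<lambda>_. euclidean) UNIV) (PiE UNIV S)"
    by (subst compactin_PiE) (auto simp: S_def)
  moreover have "closed {v. sq_norm n v = 1}"
    unfolding sq_norm_def by (rule closed_Collect_eq) (intro continuous_intros)+
  ultimately have "compact K"
    unfolding K_def by (simp add: euclidean_product_topology compact_Int_closed)
  moreover have "(\<lambda>x. if x = {} then 1 else 0) \<in> K"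
    by (auto simp: K_def S_def sq_norm_indicator_empty cube_def)
  moreover have "continuous_on K (quad_form n A)"
    unfolding quad_form_def by (intro continuous_intros)
  ultimately obtain w where w: "w \<in> K" and max: "\<And>v. v \<in> K \<Longrightarrow> quad_form n A v \<le> quad_form n A w"
    using continuous_attains_sup[of K "quad_form n A"] by blast
  have "quad_form n A v \<le> quad_form n A w" if v: "sq_norm n v = 1" for v
  proof -
    define v' where "v' x = (if x \<in> cube n then v x else 0)" for x
    have "(v x)\<^sup>2 \<le> 1" if "x \<in> cube n" for x
      using member_le_sum[of x "cube n" "\<lambda>x. (v x)\<^sup>2"] that v by (simp add: sq_norm_def finite_cube)
    then have "v' \<in> K"
      using v by (auto simp: K_def S_def v'_def abs_square_le_1 abs_le_iff sq_norm_cong[of n v' v])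
    moreover have "quad_form n A v' = quad_form n A v"
      by (rule quad_form_cong) (simp add: v'_def)
    ultimately show ?thesis
      using max by metis
  qed
  moreover have "sq_norm n w = 1"
    using w by (simp add: K_def)
  ultimately show ?thesis
    using that by blast
qed

lemma quad_form_le_mult_sq_norm:
  assumes "\<And>v. sq_norm n v = 1 \<Longrightarrow> quad_form n A v \<le> m"
  shows "quad_form n A v \<le> m * sq_norm n v"
proof (cases "sq_norm n v = 0")
  case True
  then have "quad_form n A v = quad_form n A (\<lambda>_. 0)"
    by (intro quad_form_cong) (simp add: sq_norm_eq_0_iff)
  then show ?thesis
    using True by (simp add: quad_form_def)
next
  case False
  then have pos: "0 < sq_norm n v"
    using sq_norm_nonneg[of n v] by simp
  define c where "c = 1 / sqrt (sq_norm n v)"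
  have c2: "c\<^sup>2 = 1 / sq_norm n v"
    using pos by (simp add: c_def power_divide)
  then have "sq_norm n (\<lambda>x. c * v x) = 1"
    using pos by (simp add: sq_norm_scale)
  then have "c\<^sup>2 * quad_form n A v \<le> m"
    using assms by (simp flip: quad_form_scale)
  then show ?thesis
    using pos by (simp add: c2 field_simps)
qed

lemma quad_form_polarization:
  assumes "\<And>x y. A x y = A y x"
  shows "quad_form n A (\<lambda>x. u x + s x) - quad_form n A (\<lambda>x. u x - s x)
           = 4 * (\<Sum>x\<in>cube n. s x * mvec n A u x)"
proof -
  have "quad_form n A (\<lambda>x. u x + s x) - quad_form n A (\<lambda>x. u x - s x)
      = 2 * (\<Sum>x\<in>cube n. \<Sum>y\<in>cube n. u x * A x y * s y) + 2 * (\<Sum>x\<in>cube n. \<Sum>y\<in>cube n. s x * A x y * u y)"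
    unfolding quad_form_def by (simp add: algebra_simps sum.distrib sum_subtractf sum_distrib_left)
  also have "(\<Sum>x\<in>cube n. \<Sum>y\<in>cube n. u x * A x y * s y) = (\<Sum>x\<in>cube n. \<Sum>y\<in>cube n. s x * A x y * u y)"
    by (subst sum.swap) (simp add: assms mult_ac)
  finally show ?thesis
    by (simp add: mvec_def sum_distrib_left mult_ac)
qed

lemma op_norm_le_of_abs_quad_form_le:
  assumes sym: "\<And>x y. A x y = A y x"
    and bound: "\<And>v. \<bar>quad_form n A v\<bar> \<le> m * sq_norm n v"
  shows "op_norm n A \<le> m"
proof (rule op_norm_le)
  fix u assume "vnorm n u = 1"
  then have u: "sq_norm n u = 1"
    by (simp add: vnorm_eq_1_iff)
  define t where "t = vnorm n (mvec n A u)"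
  show "vnorm n (mvec n A u) \<le> m"
  proof (cases "t = 0")
    case True
    then show ?thesis
      using bound[of u] u by (simp add: t_def)
  next
    case False
    then have t_pos: "0 < t"
      using sq_norm_nonneg[of n "mvec n A u"] by (simp add: t_def vnorm_eq_sqrt_sq_norm)
    define s where "s = (\<lambda>x. mvec n A u x / t)"
    have "sq_norm n (mvec n A u) = t\<^sup>2"
      by (simp add: t_def vnorm_eq_sqrt_sq_norm sq_norm_nonneg)
    then have s_unit: "sq_norm n s = 1"
      using t_pos sq_norm_scale[of n "1 / t" "mvec n A u"] by (simp add: s_def power_divide)
    have "(\<Sum>x\<in>cube n. s x * mvec n A u x) = sq_norm n (mvec n A u) / t"
      by (simp add: s_def sq_norm_def power2_eq_square sum_divide_distrib)
    also have "\<dots> = t"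
      using \<open>sq_norm n (mvec n A u) = t\<^sup>2\<close> t_pos by (simp add: power2_eq_square)
    finally have s_Au: "(\<Sum>x\<in>cube n. s x * mvec n A u x) = t" .
    have "4 * t = quad_form n A (\<lambda>x. u x + s x) - quad_form n A (\<lambda>x. u x - s x)"
      using quad_form_polarization[OF sym] s_Au by simp
    also have "\<dots> \<le> m * sq_norm n (\<lambda>x. u x + s x) + m * sq_norm n (\<lambda>x. u x - s x)"
      using bound[of "\<lambda>x. u x + s x"] bound[of "\<lambda>x. u x - s x"] by linarith
    also have "\<dots> = 4 * m"
      using parallelogram_sq_norm[of n u s] u s_unit by (simp flip: distrib_left)
    finally show ?thesis
      by (simp add: t_def)
  qed
qed

lemma sq_norm_alternating_sign: "sq_norm n (\<lambda>x. (-1) ^ card x * v x) = sq_norm n v"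
  by (simp add: sq_norm_def power_mult_distrib flip: power_mult)

lemma quad_form_alternating_sign:
  assumes "\<And>x y. x \<in> cube n \<Longrightarrow> y \<in> cube n \<Longrightarrow> A x y \<noteq> 0 \<Longrightarrow> card (sym_diff x y) = 1"
  shows "quad_form n A (\<lambda>x. (-1) ^ card x * v x) = - quad_form n A v"
  unfolding quad_form_mult_diag quad_form_def sum_negf[symmetric]
proof (intro sum.cong refl)
  fix x y assume xy: "x \<in> cube n" "y \<in> cube n"
  show "v x * ((-1) ^ card x * A x y * (-1) ^ card y) * v y = - (v x * A x y * v y)"
  proof (cases "A x y = 0")
    case False
    then have "(-1::real) ^ card x * (-1) ^ card y = -1"
      using assms[OF xy] neg_one_power_card_sym_diff finite_of_mem_cube xy by (metis power_one_right)
    then show ?thesis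
      by (simp add: algebra_simps)
  qed simp
qed

lemma op_norm_eq_max_quad_form:
  assumes sym: "\<And>x y. A x y = A y x"
    and bipartite: "\<And>x y. x \<in> cube n \<Longrightarrow> y \<in> cube n \<Longrightarrow> A x y \<noteq> 0 \<Longrightarrow> card (sym_diff x y) = 1"
  obtains w where "vnorm n w = 1" "quad_form n A w = op_norm n A"
proof -
  obtain w where w: "sq_norm n w = 1" and max: "\<And>v. sq_norm n v = 1 \<Longrightarrow> quad_form n A v \<le> quad_form n A w"
    using quad_form_attains_max[of n A] by blast
  have upper: "quad_form n A v \<le> quad_form n A w * sq_norm n v" for v
    using max by (rule quad_form_le_mult_sq_norm)
  have "- quad_form n A v \<le> quad_form n A w * sq_norm n v" for v
    using upper[of "\<lambda>x. (-1) ^ card x * v x"]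
    by (simp add: quad_form_alternating_sign[OF bipartite] sq_norm_alternating_sign)
  with upper have "op_norm n A \<le> quad_form n A w"
    by (intro op_norm_le_of_abs_quad_form_le[OF sym]) (simp add: abs_le_iff)
  moreover have "quad_form n A w \<le> op_norm n A"
    using w by (intro quad_form_le_op_norm) (simp add: vnorm_eq_1_iff)
  ultimately show ?thesis
    using that w by (simp add: vnorm_eq_1_iff)
qed

theorem lemma4p2:
  fixes n :: nat and f :: "nat set \<Rightarrow> real"
  assumes "\<forall>x\<in>cube n. f x \<in> {0, 1}"
  defines "g \<equiv> (\<lambda>x. 1 - 2 * f x)"
  defines "R \<equiv> mmul n (hadamard n) (mmul n (mdiag g) (hadamard n))"
  defines "M \<equiv> (\<lambda>x y. mmul n R (mmul n weight_mat R) x y - weight_mat x y)"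
  shows "(\<exists>v. vnorm n v = 1 \<and> quad_form n M v = op_norm n (sens_adj f))
       \<and> (\<forall>v. vnorm n v = 1 \<longrightarrow> quad_form n M v \<le> op_norm n (sens_adj f))"
proof -
  let ?H = "hadamard n" and ?A = "sens_adj f"
  have M_eq: "quad_form n M v = quad_form n ?A (mvec n ?H v)" for v
    unfolding M_def R_def g_def by (rule quad_form_conj_weight_eq_sens_adj[OF assms(1)])
  have A_sym: "?A x y = ?A y x" for x y
    by (auto simp: sens_adj_def Un_commute)
  have A_bipartite: "card (sym_diff x y) = 1"
    if "x \<in> cube n" "y \<in> cube n" "?A x y \<noteq> 0" for x y
    using that by (simp add: sens_adj_def split: if_splits)
  obtain w where w: "vnorm n w = 1" and w_max: "quad_form n ?A w = op_norm n ?A"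
    using op_norm_eq_max_quad_form[of ?A n, OF A_sym A_bipartite] by blast
  have "quad_form n M (mvec n ?H w) = quad_form n ?A (mvec n ?H (mvec n ?H w))"
    by (rule M_eq)
  also have "\<dots> = op_norm n ?A"
    unfolding w_max[symmetric] by (rule quad_form_cong) (rule hadamard_involutive)
  finally have "quad_form n M (mvec n ?H w) = op_norm n ?A" .
  moreover have "vnorm n (mvec n ?H w) = 1"
    using w by (simp add: vnorm_eq_1_iff sq_norm_hadamard)
  moreover have "quad_form n M v \<le> op_norm n ?A" if "vnorm n v = 1" for v
    using that by (simp add: M_eq quad_form_le_op_norm vnorm_eq_1_iff sq_norm_hadamard)
  ultimately show ?thesis
    by blast
qed

end
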